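(* Under the setting and quadratic assumption described in the context, the replacement of an agent, denoted $R$, results in $$\mathbb{E}\left[\Delta f_t \mid R\right] \leq \frac{3n^2-3n+1}{2n^2}\left(\beta-\alpha\right).$$
   Context: A fixed set of $n$ agents on a complete graph solves $\min_{x\in S_n} f^t(x)=\sum_{i=1}^n f_i^t(x_i)$, where $S_n=\{x\in\mathbb{R}_{\ge 0}^n : \mathds{1}^\top x = n\}$ (every agent has demand $d_i^t=1$). Each local cost $f_i^t:\mathbb{R}_{\ge0}\to\mathbb{R}_{\ge0}$ is one-dimensional, continuously differentiable, $\alpha$-strongly convex, $\beta$-smooth, with $\arg\min_{x\ge 0} f_i^t(x)=0$ and $f_i^t(0)=0$; moreover every local cost (including that of any joining agent) is quadratic, $f_i(x_i)=\phi_i x_i^2$ with $\phi_i\in[\alpha/2,\beta/2]$. The estimates $x^t\in S_n$ evolve by events: either an update (a pairwise Random Coordinate Descent step between agents $i,j$: $x_i^+=x_i-\frac1\beta(f_i'(x_i)-f_j'(x_j))$, $x_j^+=x_j-\frac1\beta(f_j'(x_j)-f_i'(x_i))$) or a replacement $R$, i.e. simultaneous departure and arrival. At a departure, a leaving agent $\ell$ chosen uniformly among the $n$ agents sends its estimate $x_\ell$ to all others, which update $x_i^+=(1-\frac1n)x_i+\frac1n x_\ell$; at an arrival, the joining agent initializes its estimate to $1$. Here $\Delta f_t := f^{t+1}(x^{t+1})-f^t(x^t)$ is the one-step variation of the total cost evaluated at the estimates. *)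

theory Defs
  imports Complex_Main
begin

text \<open>Agents are indexed by 0..n-1. Local costs are quadratic: f_i(y) = phi i * y^2.\<close>

definition total_cost :: "nat \<Rightarrow> (nat \<Rightarrow> real) \<Rightarrow> (nat \<Rightarrow> real) \<Rightarrow> real" where
  "total_cost n phi x = (\<Sum>i<n. phi i * (x i)^2)"

definition in_simplex :: "nat \<Rightarrow> (nat \<Rightarrow> real) \<Rightarrow> bool" where
  "in_simplex n x \<longleftrightarrow> (\<forall>i<n. x i \<ge> 0) \<and> (\<Sum>i<n. x i) = real n"

text \<open>Replacement with leaving agent l: the others average with x l, and the
 joining agent (placed in slot l) starts with estimate 1 and cost coefficient psi.\<close>

definition repl_state :: "nat \<Rightarrow> (nat \<Rightarrow> real) \<Rightarrow> nat \<Rightarrow> nat \<Rightarrow> real" where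
  "repl_state n x l = (\<lambda>i. if i = l then 1 else (1 - 1 / real n) * x i + x l / real n)"

definition repl_costs :: "(nat \<Rightarrow> real) \<Rightarrow> nat \<Rightarrow> real \<Rightarrow> nat \<Rightarrow> real" where
  "repl_costs phi l psi = phi(l := psi)"

text \<open>Expected one-step cost variation given a replacement; the leaving agent is
 uniform over the n agents, the joiner's coefficient psi l may depend on l.\<close>

definition expected_delta_repl ::
  "nat \<Rightarrow> (nat \<Rightarrow> real) \<Rightarrow> (nat \<Rightarrow> real) \<Rightarrow> (nat \<Rightarrow> real) \<Rightarrow> real" where
  "expected_delta_repl n phi psi x =
     (\<Sum>l<n. (1 / real n) *
        (total_cost n (repl_costs phi l (psi l)) (repl_state n x l) - total_cost n phi x))"

end

theory Submission imports Defs begin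

text \<open>Write each cost coefficient as \<open>\<alpha>/2\<close> plus an excess in \<open>[0, (\<beta> - \<alpha>)/2]\<close>.
The \<open>\<alpha>/2\<close> part contributes \<open>\<alpha>/2\<close> times the expected variation of the uniform cost
\<open>\<Sum>i. x\<^sub>i\<^sup>2\<close>, which equals \<open>(3n - 2)(n - \<Sum>i. x\<^sub>i\<^sup>2)/n\<^sup>2 \<le> 0\<close> on the simplex. The excess part
is at most \<open>(\<beta> - \<alpha>)/2\<close> times the newcomer's unit cost plus the positive parts of the
increases of the squared estimates. When \<open>l\<close> leaves, \<open>x\<^sub>i\<close> is pulled towards \<open>x\<^sub>l\<close>,
and when \<open>i\<close> leaves, \<open>x\<^sub>l\<close> is pulled towards \<open>x\<^sub>i\<close>; only the smaller of the two can
grow, by at most \<open>(x\<^sub>i\<^sup>2 + x\<^sub>l\<^sup>2 + (2n - 2) x\<^sub>i x\<^sub>l)/n\<^sup>2\<close>, and summing over pairs bounds all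
positive parts by \<open>n - 1\<close>. This yields the sharper bound \<open>(2n - 1)/(2n) (\<beta> - \<alpha>)\<close>.\<close>

definition pull_sq_increase :: "real \<Rightarrow> real \<Rightarrow> real \<Rightarrow> real" where
  "pull_sq_increase m v u = ((1 - 1 / m) * v + u / m)\<^sup>2 - v\<^sup>2"

lemma pull_sq_increase_self [simp]: "pull_sq_increase m v v = 0"
  by (simp add: pull_sq_increase_def algebra_simps)

lemma pull_sq_increase_eq:
  assumes "m \<noteq> 0"
  shows "pull_sq_increase m v u = (u - v) * ((2 * m - 1) * v + u) / m\<^sup>2"
  using assms by (simp add: pull_sq_increase_def field_simps power2_eq_square)

lemma pull_sq_increase_nonpos:
  assumes "m \<ge> 1" "0 \<le> u" "u \<le> v"
  shows "pull_sq_increase m v u \<le> 0"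
proof -
  have "(u - v) * ((2 * m - 1) * v + u) \<le> 0"
    using assms by (intro mult_nonpos_nonneg) auto
  then show ?thesis
    using assms by (simp add: pull_sq_increase_eq divide_nonpos_pos)
qed

lemma pull_sq_increase_le:
  assumes "m \<ge> 1" "0 \<le> v" "v \<le> u"
  shows "pull_sq_increase m v u \<le> (u\<^sup>2 + v\<^sup>2 + (2 * m - 2) * u * v) / m\<^sup>2"
proof -
  have "(u - v) * ((2 * m - 1) * v + u) \<le> u\<^sup>2 + v\<^sup>2 + (2 * m - 2) * u * v"
    using assms by (simp add: algebra_simps power2_eq_square)
  then show ?thesis
    using assms by (simp add: pull_sq_increase_eq divide_right_mono)
qed

lemma pos_part_pull_sq_increase_pair_le:
  assumes "m \<ge> 1" "0 \<le> u" "0 \<le> v"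
  shows "max 0 (pull_sq_increase m v u) + max 0 (pull_sq_increase m u v)
           \<le> (u\<^sup>2 + v\<^sup>2 + (2 * m - 2) * u * v) / m\<^sup>2"
proof -
  have bound_nonneg: "0 \<le> (u\<^sup>2 + v\<^sup>2 + (2 * m - 2) * u * v) / m\<^sup>2"
    using assms by simp
  have bound_sym: "(v\<^sup>2 + u\<^sup>2 + (2 * m - 2) * v * u) / m\<^sup>2
      = (u\<^sup>2 + v\<^sup>2 + (2 * m - 2) * u * v) / m\<^sup>2"
    by (simp add: algebra_simps)
  show ?thesis
  proof (cases "v \<le> u")
    case True
    then show ?thesis
      using bound_nonneg pull_sq_increase_le[OF assms(1,3) True]
        pull_sq_increase_nonpos[OF assms(1,3) True]
      by linarith
  next
    case False
    then have "u \<le> v" by simp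
    then show ?thesis
      using bound_nonneg bound_sym pull_sq_increase_le[OF assms(1,2) \<open>u \<le> v\<close>]
        pull_sq_increase_nonpos[OF assms(1,2) \<open>u \<le> v\<close>]
      by linarith
  qed
qed

lemma mult_le_lower_plus_pos_part:
  fixes a b c d :: real
  assumes "a \<le> c" "c \<le> b"
  shows "c * d \<le> a * d + (b - a) * max 0 d"
proof -
  have "(c - a) * d \<le> (c - a) * max 0 d"
    using assms by (intro mult_left_mono) auto
  also have "\<dots> \<le> (b - a) * max 0 d"
    using assms by (intro mult_right_mono) auto
  finally show ?thesis
    by (simp add: algebra_simps)
qed

lemma card_le_sum_squares:
  fixes x :: "'a \<Rightarrow> real"
  assumes "finite A" "(\<Sum>i\<in>A. x i) = card A"
  shows "card A \<le> (\<Sum>i\<in>A. (x i)\<^sup>2)"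
proof -
  have "0 \<le> (\<Sum>i\<in>A. (x i - 1)\<^sup>2)"
    by (intro sum_nonneg) auto
  also have "\<dots> = (\<Sum>i\<in>A. (x i)\<^sup>2) - 2 * (\<Sum>i\<in>A. x i) + card A"
    by (simp add: power2_eq_square algebra_simps sum.distrib sum_subtractf sum_distrib_left
        sum_distrib_right)
  finally show ?thesis
    using assms(2) by simp
qed

text \<open>The term \<open>i = l\<close> of the sum vanishes, so the sum may run over all agents.\<close>

lemma total_cost_repl_diff:
  assumes "l < n"
  shows "total_cost n (repl_costs phi l c) (repl_state n x l) - total_cost n phi x
           = c - phi l * (x l)\<^sup>2 + (\<Sum>i<n. phi i * pull_sq_increase (real n) (x i) (x l))"
proof -
  have "(phi(l := c)) i * (repl_state n x l i)\<^sup>2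
          = phi i * (x i)\<^sup>2 + phi i * pull_sq_increase (real n) (x i) (x l)
            + (if i = l then c - phi l * (x l)\<^sup>2 else 0)" for i
    by (simp add: repl_state_def pull_sq_increase_def algebra_simps)
  then show ?thesis
    using assms by (simp add: total_cost_def repl_costs_def sum.distrib)
qed

lemma total_cost_repl_diff_le_uniform:
  assumes "l < n"
    and "\<And>i. i < n \<Longrightarrow> a \<le> phi i \<and> phi i \<le> b" and "a \<le> c" "c \<le> b"
  shows "total_cost n (repl_costs phi l c) (repl_state n x l) - total_cost n phi x
           \<le> a * (total_cost n (repl_costs (\<lambda>_. 1) l 1) (repl_state n x l)
                    - total_cost n (\<lambda>_. 1) x)
             + (b - a) * (1 + (\<Sum>i<n. max 0 (pull_sq_increase (real n) (x i) (x l))))"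
proof -
  let ?d = "\<lambda>i. pull_sq_increase (real n) (x i) (x l)"
  have "c * 1 \<le> a * 1 + (b - a) * max 0 1"
    using assms by (intro mult_le_lower_plus_pos_part)
  moreover have "phi l * - (x l)\<^sup>2 \<le> a * - (x l)\<^sup>2 + (b - a) * max 0 (- (x l)\<^sup>2)"
    using assms by (intro mult_le_lower_plus_pos_part) auto
  moreover have "(\<Sum>i<n. phi i * ?d i) \<le> (\<Sum>i<n. a * ?d i + (b - a) * max 0 (?d i))"
    using assms by (intro sum_mono mult_le_lower_plus_pos_part) auto
  moreover have "(\<Sum>i<n. a * ?d i + (b - a) * max 0 (?d i))
      = a * (\<Sum>i<n. ?d i) + (b - a) * (\<Sum>i<n. max 0 (?d i))"
    by (simp add: sum.distrib sum_distrib_left)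
  ultimately show ?thesis
    using assms(1) by (simp add: total_cost_repl_diff algebra_simps)
qed

lemma expected_delta_repl_uniform:
  assumes "n \<ge> 1" "in_simplex n x"
  shows "expected_delta_repl n (\<lambda>_. 1) (\<lambda>_. 1) x
           = (3 * real n - 2) * (real n - (\<Sum>i<n. (x i)\<^sup>2)) / (real n)\<^sup>2"
proof -
  define m where "m = real n"
  define S where "S = (\<Sum>i<n. (x i)\<^sup>2)"
  define a where "a = 1 - 1 / m"
  have m: "m \<ge> 1" and xsum: "(\<Sum>i<n. x i) = m"
    using assms by (auto simp: m_def in_simplex_def)
  have pull_sum: "(\<Sum>i<n. pull_sq_increase m (x i) u) = (a\<^sup>2 - 1) * S + 2 * a * u + u\<^sup>2 / m"
    for u
  proof -
    have "(\<Sum>i<n. pull_sq_increase m (x i) u)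
            = (\<Sum>i<n. (a\<^sup>2 - 1) * (x i)\<^sup>2 + (2 * a * u / m) * x i + u\<^sup>2 / m\<^sup>2)"
      using m by (intro sum.cong) (auto simp: pull_sq_increase_def a_def power2_eq_square field_simps)
    also have "\<dots> = (a\<^sup>2 - 1) * S + (2 * a * u / m) * m + m * (u\<^sup>2 / m\<^sup>2)"
      by (simp only: sum.distrib sum_distrib_left[symmetric] sum_constant)
        (simp add: xsum S_def m_def)
    also have "\<dots> = (a\<^sup>2 - 1) * S + 2 * a * u + u\<^sup>2 / m"
      using m by (simp add: power2_eq_square)
    finally show ?thesis .
  qed
  have uniform_term: "total_cost n (repl_costs (\<lambda>_. 1) l 1) (repl_state n x l)
      - total_cost n (\<lambda>_. 1) x = 1 + (a\<^sup>2 - 1) * S + 2 * a * x l + ((x l)\<^sup>2 / m - (x l)\<^sup>2)" if "l < n" for l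
  proof -
    have "total_cost n (repl_costs (\<lambda>_. 1) l 1) (repl_state n x l) - total_cost n (\<lambda>_. 1) x
        = 1 - (x l)\<^sup>2 + (\<Sum>i<n. pull_sq_increase m (x i) (x l))"
      using total_cost_repl_diff[OF that] by (simp add: m_def)
    then show ?thesis
      by (simp add: pull_sum)
  qed
  have "expected_delta_repl n (\<lambda>_. 1) (\<lambda>_. 1) x
          = (\<Sum>l<n. 1 + (a\<^sup>2 - 1) * S + 2 * a * x l + ((x l)\<^sup>2 / m - (x l)\<^sup>2)) / m"
    by (simp add: expected_delta_repl_def uniform_term sum_divide_distrib m_def)
  also have "\<dots> = (m * (1 + (a\<^sup>2 - 1) * S) + 2 * a * m + (S / m - S)) / m"
    by (simp add: sum.distrib sum_subtractf sum_divide_distrib[symmetric] sum_distrib_left[symmetric]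
        xsum S_def m_def)
  also have "\<dots> = (3 * m - 2) * (m - S) / m\<^sup>2"
    using m by (simp add: a_def field_simps power2_eq_square)
  finally show ?thesis
    by (simp add: m_def S_def)
qed

lemma expected_delta_repl_uniform_nonpos:
  assumes "n \<ge> 1" "in_simplex n x"
  shows "expected_delta_repl n (\<lambda>_. 1) (\<lambda>_. 1) x \<le> 0"
proof -
  have "real n \<le> (\<Sum>i<n. (x i)\<^sup>2)"
    using assms(2) card_le_sum_squares[of "{..<n}" x] by (simp add: in_simplex_def)
  then show ?thesis
    using assms by (simp add: expected_delta_repl_uniform divide_nonpos_pos mult_nonneg_nonpos)
qed

lemma sum_pos_part_pull_sq_increase_le:
  assumes "n \<ge> 1" "in_simplex n x"
  shows "(\<Sum>l<n. \<Sum>i<n. max 0 (pull_sq_increase (real n) (x i) (x l))) \<le> real n - 1"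
proof -
  define m where "m = real n"
  define S where "S = (\<Sum>i<n. (x i)\<^sup>2)"
  define M where "M l i = max 0 (pull_sq_increase m (x i) (x l))" for l i
  define Q where "Q l i = ((x l)\<^sup>2 + (x i)\<^sup>2 + (2 * m - 2) * x l * x i) / m\<^sup>2" for l i
  have m: "m \<ge> 1" and xpos: "\<And>i. i < n \<Longrightarrow> x i \<ge> 0" and xsum: "(\<Sum>i<n. x i) = m"
    using assms by (auto simp: m_def in_simplex_def)
  have pair: "M l i + M i l \<le> Q l i - (if i = l then Q l l else 0)" if "l < n" "i < n" for l i
    using pos_part_pull_sq_increase_pair_le[OF m xpos[OF that(1)] xpos[OF that(2)]]
    by (simp add: M_def Q_def)
  have Q_sum: "(\<Sum>l<n. \<Sum>i<n. Q l i) = 2 * S / m + 2 * m - 2"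
  proof -
    have row: "(\<Sum>i<n. Q l i) = (m * (x l)\<^sup>2 + S + (2 * m - 2) * x l * m) / m\<^sup>2" for l
      by (simp add: Q_def sum_divide_distrib[symmetric] sum.distrib sum_distrib_left[symmetric]
          S_def m_def xsum[unfolded m_def])
    have "(\<Sum>l<n. \<Sum>i<n. Q l i) = (m * S + m * S + (2 * m - 2) * m * m) / m\<^sup>2"
      by (simp add: row sum_divide_distrib[symmetric] sum.distrib sum_distrib_left[symmetric]
          sum_distrib_right[symmetric] S_def m_def xsum[unfolded m_def])
    also have "\<dots> = 2 * S / m + 2 * m - 2"
      using m by (simp add: field_simps power2_eq_square)
    finally show ?thesis .
  qed
  have Q_diag: "Q l l = 2 * m * (x l)\<^sup>2 / m\<^sup>2" for l
    by (simp add: Q_def power2_eq_square algebra_simps)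
  have "(\<Sum>l<n. Q l l) = (\<Sum>l<n. 2 * m * (x l)\<^sup>2 / m\<^sup>2)"
    by (simp add: Q_diag)
  also have "\<dots> = 2 * m * S / m\<^sup>2"
    by (simp add: S_def sum_divide_distrib[symmetric] sum_distrib_left[symmetric])
  also have "\<dots> = 2 * S / m"
    using m by (simp add: power2_eq_square)
  finally have diag_sum: "(\<Sum>l<n. Q l l) = 2 * S / m" .
  have "2 * (\<Sum>l<n. \<Sum>i<n. M l i) = (\<Sum>l<n. \<Sum>i<n. M l i + M i l)"
    using sum.swap[of M "{..<n}" "{..<n}"] by (simp add: sum.distrib)
  also have "\<dots> \<le> (\<Sum>l<n. \<Sum>i<n. Q l i - (if i = l then Q l l else 0))"
    by (intro sum_mono pair) auto
  also have "\<dots> = 2 * m - 2"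
    by (simp add: sum_subtractf Q_sum diag_sum)
  finally show ?thesis
    by (simp add: M_def m_def)
qed

lemma expected_delta_repl_le_uniform:
  assumes "\<And>i. i < n \<Longrightarrow> a \<le> phi i \<and> phi i \<le> b"
    and "\<And>l. l < n \<Longrightarrow> a \<le> psi l \<and> psi l \<le> b"
  shows "expected_delta_repl n phi psi x
           \<le> a * expected_delta_repl n (\<lambda>_. 1) (\<lambda>_. 1) x
             + (b - a) * (real n + (\<Sum>l<n. \<Sum>i<n. max 0 (pull_sq_increase (real n) (x i) (x l))))
               / real n"
proof -
  define T where "T l = total_cost n (repl_costs (\<lambda>_. 1) l 1) (repl_state n x l)
      - total_cost n (\<lambda>_. 1) x" for l
  define G where "G l = 1 + (\<Sum>i<n. max 0 (pull_sq_increase (real n) (x i) (x l)))" for l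
  have "expected_delta_repl n phi psi x \<le> (\<Sum>l<n. (1 / real n) * (a * T l + (b - a) * G l))"
    unfolding expected_delta_repl_def T_def G_def
    using assms by (intro sum_mono mult_left_mono total_cost_repl_diff_le_uniform) auto
  also have "\<dots> = a * (\<Sum>l<n. (1 / real n) * T l) + (b - a) * (\<Sum>l<n. G l) / real n"
    by (simp only: sum_distrib_left[symmetric] sum.distrib)
      (simp add: algebra_simps diff_divide_distrib)
  also have "(\<Sum>l<n. (1 / real n) * T l) = expected_delta_repl n (\<lambda>_. 1) (\<lambda>_. 1) x"
    by (simp add: expected_delta_repl_def T_def)
  also have "(\<Sum>l<n. G l) = real n + (\<Sum>l<n. \<Sum>i<n. max 0 (pull_sq_increase (real n) (x i) (x l)))"
    by (simp add: G_def sum.distrib)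
  finally show ?thesis .
qed

theorem proposition3:
  fixes n :: nat and alpha beta :: real
    and phi psi x :: "nat \<Rightarrow> real"
  assumes "n \<ge> 1"
    and "0 < alpha" and "alpha \<le> beta"
    and "\<And>i. i < n \<Longrightarrow> alpha / 2 \<le> phi i \<and> phi i \<le> beta / 2"
    and "\<And>l. l < n \<Longrightarrow> alpha / 2 \<le> psi l \<and> psi l \<le> beta / 2"
    and "in_simplex n x"
  shows "expected_delta_repl n phi psi x
           \<le> (3 * real n ^ 2 - 3 * real n + 1) / (2 * real n ^ 2) * (beta - alpha)"
proof -
  let ?P = "\<Sum>l<n. \<Sum>i<n. max 0 (pull_sq_increase (real n) (x i) (x l))"
  have "expected_delta_repl n phi psi x
          \<le> alpha / 2 * expected_delta_repl n (\<lambda>_. 1) (\<lambda>_. 1) x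
            + (beta / 2 - alpha / 2) * (real n + ?P) / real n"
    using assms(4,5) by (rule expected_delta_repl_le_uniform)
  also have "\<dots> \<le> alpha / 2 * 0 + (beta / 2 - alpha / 2) * (2 * real n - 1) / real n"
    using assms expected_delta_repl_uniform_nonpos sum_pos_part_pull_sq_increase_le
    by (intro add_mono mult_left_mono divide_right_mono) auto
  also have "\<dots> = (real n * (2 * real n - 1)) / (2 * real n ^ 2) * (beta - alpha)"
    using assms(1) by (simp add: field_simps power2_eq_square)
  also have "\<dots> \<le> (3 * real n ^ 2 - 3 * real n + 1) / (2 * real n ^ 2) * (beta - alpha)"
    using zero_le_power2[of "real n - 1"] assms(3)
    by (intro mult_right_mono divide_right_mono) (auto simp: power2_eq_square algebra_simps)
  finally show ?thesis .
qed

end
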